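(* Let $\theta\in\mathbb{R}^q$ be constant and consider the perturbed regression $y=\phi^\top\theta+d$ with $d$ a bounded scalar signal, in CT or DT, where $\phi$ is bounded (and continuous in CT) and the unperturbed regression is identifiable, i.e. there exist $q$ time instants (positive reals in CT, nonnegative integers in DT) $\tau_1,\dots,\tau_q$ with $\mathrm{rank}[\phi(\tau_1)|\cdots|\phi(\tau_q)]=q$. Let the estimator be: in CT, $\dot{\hat\theta}_g=-\gamma_g(t)\phi\phi^\top\hat\theta_g+\gamma_g(t)\phi y$, $\hat\theta_g(0)=\theta_{g0}$, $\dot\Phi=-\gamma_g(t)\phi\phi^\top\Phi$, $\Phi(0)=I_q$, $\dot{\hat\theta}=\gamma\Delta(Y-\Delta\hat\theta)$; in DT, with $g(k)=1/(\gamma_g(k)+|\phi(k)|^2)$, $\hat\theta_g(k+1)=(I_q-g\phi\phi^\top)\hat\theta_g(k)+g\phi y(k)$, $\Phi(k+1)=(I_q-g\phi\phi^\top)\Phi(k)$, $\Phi(0)=I_q$, $\hat\theta(k+1)=\hat\theta(k)+\frac{\Delta(k)}{\gamma+\Delta^2(k)}(Y(k)-\Delta(k)\hat\theta(k))$; here $\gamma>0$, $\theta_{g0},\hat\theta(0)\in\mathbb{R}^q$ arbitrary, $\mathcal D=I_q-\Phi$, $\Delta=\det\{\mathcal D\}$, $Y=\mathrm{adj}\{\mathcal D\}(\hat\theta_g-\Phi\theta_{g0})$. Suppose the gain $\gamma_g(\cdot)>0$ (continuous in CT) satisfies $\int_0^\infty\gamma_g(t)\,dt<\infty$ in CT, respectively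 $\sum_{k=0}^\infty 1/\gamma_g(k)<\infty$ in DT. Then the parameter error $\tilde\theta:=\hat\theta-\theta$ remains bounded. *)

theory Defs
  imports "HOL-Analysis.Analysis"
begin

definition outer :: "real^'q \<Rightarrow> real^'q^'q" where
  "outer v = (\<chi> i j. v $ i * v $ j)"

text \<open>Cofactor matrix (HOL Light style): entry (i,j) is the determinant of A with
  row i replaced by the j-th unit row; this equals (-1)^(i+j) times the (i,j) minor.\<close>
definition cofactor :: "real^'q^'q \<Rightarrow> real^'q^'q" where
  "cofactor A = (\<chi> i j. det (\<chi> k l. if k = i then (if l = j then 1 else 0) else A $ k $ l))"

definition adjugate :: "real^'q^'q \<Rightarrow> real^'q^'q" where
  "adjugate A = transpose (cofactor A)"

end

theory Submission
  imports Defs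
begin

text \<open>The matrix \<open>\<Phi>\<close> is the transition matrix of the gradient filter. It is nonexpansive, and since
  the total gain is finite (\<open>\<gamma>g\<close> integrable, resp. \<open>1/\<gamma>g\<close> summable) it converges to a limit
  \<open>\<Phi>\<^sub>\<infinity>\<close>. A vector fixed by \<open>\<Phi>\<^sub>\<infinity>\<close> keeps its length along the trajectory, so it is orthogonal
  to every regressor value and never moved by \<open>\<Phi>\<close>; by identifiability it is zero, so \<open>\<Delta> = det (I - \<Phi>)\<close>
  is eventually bounded away from zero.

  Because \<open>adj (I - \<Phi>) (I - \<Phi>) = \<Delta> I\<close>, the error \<open>e = \<theta>h - \<theta>\<close> satisfies the scalar-gain equation
  \<open>e' = \<gamma> \<Delta> (adj (I - \<Phi>) w - \<Delta> e)\<close> (resp. its normalised discrete analogue), where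
  \<open>w = \<theta>g - \<Phi> \<theta>g0 - (I - \<Phi>) \<theta>\<close> is driven by the disturbance alone and stays bounded, again because
  the total gain is finite. Once \<open>|\<Delta>| \<ge> \<delta> > 0\<close> this equation is exponentially stable with bounded
  input, so \<open>e\<close> is bounded.\<close>

section \<open>Determinants and adjugates\<close>

lemma outer_mult_vector: "outer v *v x = (v \<bullet> x) *\<^sub>R v"
  by (simp add: outer_def matrix_vector_mult_def vec_eq_iff inner_vec_def sum_distrib_left algebra_simps)

lemma det_unit_row_eq_det_unit_column:
  fixes A :: "real^'n^'n"
  shows "det (\<chi> k l. if k = j then (if l = i then 1 else 0) else A$k$l) =
         det (\<chi> k l. if l = i then (if k = j then 1 else 0) else A$k$l)"
  unfolding det_def
proof (rule sum.cong[OF refl])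
  fix p assume "p \<in> {p. p permutes (UNIV::'n set)}"
  then have p: "p permutes (UNIV::'n set)" by simp
  have U: "(UNIV::'n set) = insert j (UNIV - {j})" by auto
  have row: "(\<Prod>k\<in>UNIV. (\<chi> k l. if k = j then (if l = i then 1 else 0) else A$k$l) $ k $ p k)
      = (if p j = i then (\<Prod>k\<in>UNIV-{j}. A$k$p k) else 0)"
    by (subst U, subst prod.insert) auto
  have col: "(\<Prod>k\<in>UNIV. (\<chi> k l. if l = i then (if k = j then 1 else 0) else A$k$l) $ k $ p k)
      = (if p j = i then (\<Prod>k\<in>UNIV-{j}. A$k$p k) else 0)"
  proof (cases "p j = i")
    case True
    then have "p k \<noteq> i" if "k \<noteq> j" for k
      using p that by (metis permutes_inj injD)
    then show ?thesis
      using True by (subst U, subst prod.insert) (auto intro!: prod.cong)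
  next
    case False
    obtain k0 where "p k0 = i" using p by (metis permutes_surj surjD)
    with False show ?thesis
      by (auto intro!: prod_zero bexI[of _ k0])
  qed
  show "of_int (sign p) * (\<Prod>k\<in>UNIV. (\<chi> k l. if k = j then (if l = i then 1 else 0) else A$k$l) $ k $ p k)
      = of_int (sign p) * (\<Prod>k\<in>UNIV. (\<chi> k l. if l = i then (if k = j then 1 else 0) else A$k$l) $ k $ p k)"
    by (simp only: row col)
qed

lemma det_column_linear:
  fixes A :: "real^'n^'n"
  shows "det (\<chi> k l. if l = i then b$k else A$k$l) =
    (\<Sum>j\<in>UNIV. b$j * det (\<chi> k l. if l = i then (if k = j then 1 else 0) else A$k$l))"
proof -
  have "det (\<chi> k l. if l = i then b$k else A$k$l) =
        det (\<chi> l. if l = i then (\<Sum>j\<in>UNIV. b$j *s axis j 1) else column l A)"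
    by (subst det_transpose[symmetric])
      (auto intro!: arg_cong[where f=det] simp: vec_eq_iff transpose_def column_def axis_def
        if_distrib[of "\<lambda>x. _ * x"] cong: if_cong)
  also have "\<dots> = (\<Sum>j\<in>UNIV. b$j * det (\<chi> l. if l = i then axis j 1 else column l A))"
    by (subst det_linear_row_sum) (simp_all add: det_row_mul)
  also have "\<dots> = (\<Sum>j\<in>UNIV. b$j * det (\<chi> k l. if l = i then (if k = j then 1 else 0) else A$k$l))"
    by (rule sum.cong[OF refl], subst det_transpose[symmetric], rule arg_cong[where f="\<lambda>M. _ * det M"])
      (simp add: vec_eq_iff transpose_def column_def axis_def)
  finally show ?thesis .
qed

lemma adjugate_mult_vector: "adjugate A *v (A *v x) = det A *\<^sub>R x"
proof -
  have "(adjugate A *v b) $ k = det (\<chi> r l. if l = k then b$r else A$r$l)" for b k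
    by (simp add: adjugate_def cofactor_def matrix_vector_mult_def transpose_def mult.commute
        det_unit_row_eq_det_unit_column det_column_linear)
  then show ?thesis
    by (simp add: vec_eq_iff cramer_lemma mult.commute)
qed

lemma tendsto_det:
  fixes M :: "'a \<Rightarrow> real^'n^'n"
  shows "(M \<longlongrightarrow> L) F \<Longrightarrow> ((\<lambda>t. det (M t)) \<longlongrightarrow> det L) F"
  unfolding det_def by (intro tendsto_intros)

lemma tendsto_adjugate:
  fixes M :: "'a \<Rightarrow> real^'n^'n"
  shows "(M \<longlongrightarrow> L) F \<Longrightarrow> ((\<lambda>t. adjugate (M t)) \<longlongrightarrow> adjugate L) F"
  unfolding adjugate_def transpose_def cofactor_def
  by (intro vec_tendstoI, simp, intro tendsto_det vec_tendstoI, simp) (intro impI tendsto_vec_nth)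

lemma tendsto_matrix_if_entries_converge:
  fixes M :: "'a \<Rightarrow> real^'n^'m"
  assumes "\<And>i j. \<exists>l. ((\<lambda>t. M t $ i $ j) \<longlongrightarrow> l) F"
  shows "\<exists>L. (M \<longlongrightarrow> L) F"
proof -
  obtain l where "\<And>i j. ((\<lambda>t. M t $ i $ j) \<longlongrightarrow> l i j) F"
    using assms by metis
  then have "(M \<longlongrightarrow> (\<chi> i j. l i j)) F"
    by (intro vec_tendstoI) simp
  then show ?thesis ..
qed

lemma norm_matrix_vector_le_entry_sum:
  fixes A :: "real^'n^'m"
  shows "norm (A *v x) \<le> (\<Sum>i\<in>UNIV. \<Sum>j\<in>UNIV. \<bar>A $ i $ j\<bar>) * norm x"
  by (rule order_trans[OF onorm mult_right_mono[OF onorm_le_matrix_component_sum]]) auto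

lemma eventually_det_adjugate_bounds:
  fixes M :: "'a \<Rightarrow> real^'n^'n"
  assumes lim: "(M \<longlongrightarrow> L) F" and "det L \<noteq> 0"
  obtains \<delta> D A where "\<delta> > 0" "A \<ge> 0"
    "eventually (\<lambda>t. \<delta> \<le> \<bar>det (M t)\<bar> \<and> \<bar>det (M t)\<bar> \<le> D \<and>
        (\<forall>x. norm (adjugate (M t) *v x) \<le> A * norm x)) F"
proof
  let ?S = "\<lambda>B :: real^'n^'n. \<Sum>i\<in>UNIV. \<Sum>j\<in>UNIV. \<bar>B $ i $ j\<bar>"
  have det_lim: "((\<lambda>t. \<bar>det (M t)\<bar>) \<longlongrightarrow> \<bar>det L\<bar>) F"
    by (intro tendsto_intros tendsto_det lim)
  have adj_lim: "((\<lambda>t. ?S (adjugate (M t))) \<longlongrightarrow> ?S (adjugate L)) F"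
    by (intro tendsto_intros tendsto_vec_nth tendsto_adjugate lim)
  show "\<bar>det L\<bar> / 2 > 0" "?S (adjugate L) + 1 \<ge> 0"
    using \<open>det L \<noteq> 0\<close> by (auto intro: add_nonneg_nonneg sum_nonneg)
  have "eventually (\<lambda>t. \<bar>det L\<bar> / 2 < \<bar>det (M t)\<bar> \<and> \<bar>det (M t)\<bar> < \<bar>det L\<bar> + 1 \<and>
      ?S (adjugate (M t)) < ?S (adjugate L) + 1) F"
    using \<open>det L \<noteq> 0\<close>
    by (intro eventually_conj order_tendstoD[OF det_lim] order_tendstoD(2)[OF adj_lim]) auto
  then show "eventually (\<lambda>t. \<bar>det L\<bar> / 2 \<le> \<bar>det (M t)\<bar> \<and> \<bar>det (M t)\<bar> \<le> \<bar>det L\<bar> + 1 \<and>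
      (\<forall>x. norm (adjugate (M t) *v x) \<le> (?S (adjugate L) + 1) * norm x)) F"
  proof eventually_elim
    case (elim t)
    have "norm (adjugate (M t) *v x) \<le> (?S (adjugate L) + 1) * norm x" for x
      using elim by (intro order_trans[OF norm_matrix_vector_le_entry_sum] mult_right_mono) auto
    with elim show ?case by auto
  qed
qed

lemma det_eq_0_obtains_kernel:
  fixes A :: "real^'n^'n"
  assumes "det A = 0"
  obtains v where "v \<noteq> 0" "A *v v = 0"
proof (rule ccontr)
  assume "\<not> thesis"
  with that have "\<forall>x. A *v x = 0 \<longrightarrow> x = 0" by blast
  then obtain B where "B ** A = mat 1" using matrix_left_invertible_ker by blast
  then have "invertible A" unfolding invertible_def using matrix_left_right_inverse by blast
  then show False using assms invertible_det_nz by blast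
qed

lemma orthogonal_to_full_rank_columns:
  fixes u :: "'n \<Rightarrow> real^'n"
  assumes "rank (\<chi> i j. u j $ i) = CARD('n)" and "\<And>j. u j \<bullet> v = 0"
  shows "v = 0"
proof -
  let ?U = "(\<chi> i j. u j $ i) :: real^'n^'n"
  have "rank (transpose ?U) = CARD('n)"
    using assms(1) by (simp add: rank_transpose)
  then have "inj ((*v) (transpose ?U))"
    by (simp add: full_rank_injective)
  moreover have "transpose ?U *v v = 0"
    using assms(2) by (simp add: vec_eq_iff matrix_vector_mult_def transpose_def inner_vec_def)
  ultimately show ?thesis by (metis injD matrix_vector_mult_0_right)
qed

lemma adjugate_estimator_identity:
  fixes P :: "real^'n^'n"
  shows "adjugate (mat 1 - P) *v (x - P *v x0) - det (mat 1 - P) *\<^sub>R h =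
    adjugate (mat 1 - P) *v (x - P *v x0 - \<theta> + P *v \<theta>) - det (mat 1 - P) *\<^sub>R (h - \<theta>)"
proof -
  let ?w = "x - P *v x0 - \<theta> + P *v \<theta>"
  have "x - P *v x0 = ?w + (mat 1 - P) *v \<theta>"
    by (simp add: matrix_vector_mult_diff_rdistrib)
  then have "adjugate (mat 1 - P) *v (x - P *v x0) = adjugate (mat 1 - P) *v (?w + (mat 1 - P) *v \<theta>)"
    by (rule arg_cong)
  also have "\<dots> = adjugate (mat 1 - P) *v ?w + det (mat 1 - P) *\<^sub>R \<theta>"
    by (simp only: matrix_vector_right_distrib adjugate_mult_vector)
  finally show ?thesis
    by (simp add: algebra_simps)
qed

section \<open>Differential inequalities on the half-line\<close>

lemma has_real_derivative_inner_self:
  assumes "(f has_vector_derivative f') (at t within S)"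
  shows "((\<lambda>t. f t \<bullet> f t) has_real_derivative 2 * (f t \<bullet> f')) (at t within S)"
  using bounded_bilinear.has_vector_derivative[OF bounded_bilinear_inner assms assms]
  by (simp add: has_real_derivative_iff_has_vector_derivative inner_commute)

lemma bounded_linear_matrix_vector_mult_left: "bounded_linear (\<lambda>A::real^'n^'m. A *v x)"
  unfolding linear_conv_bounded_linear[symmetric]
  by (auto simp: linear_iff matrix_vector_mult_def vec_eq_iff algebra_simps sum.distrib sum_distrib_left)

lemma has_vector_derivative_matrix_vector_mult:
  fixes F :: "real \<Rightarrow> real^'n^'m"
  shows "(F has_vector_derivative M) net \<Longrightarrow> ((\<lambda>t. F t *v x) has_vector_derivative (M *v x)) net"
  by (rule bounded_linear.has_vector_derivative[OF bounded_linear_matrix_vector_mult_left])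

lemma tendsto_matrix_vector_mult_left:
  fixes F :: "'a \<Rightarrow> real^'n^'m"
  shows "(F \<longlongrightarrow> A) net \<Longrightarrow> ((\<lambda>t. F t *v x) \<longlongrightarrow> A *v x) net"
  by (rule bounded_linear.tendsto[OF bounded_linear_matrix_vector_mult_left])

lemma antimono_if_derivative_nonpos:
  fixes f :: "real \<Rightarrow> real"
  assumes deriv: "\<And>t. t \<ge> 0 \<Longrightarrow> (f has_real_derivative f' t) (at t within {0..})"
    and nonpos: "\<And>t. s < t \<Longrightarrow> t < u \<Longrightarrow> f' t \<le> 0" and "0 \<le> s" "s \<le> u"
  shows "f u \<le> f s"
proof (rule DERIV_nonpos_imp_decreasing_open[OF \<open>s \<le> u\<close>])
  fix t assume t: "s < t" "t < u"
  then have "at t within {0..} = at t"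
    using \<open>0 \<le> s\<close> by (intro at_within_interior) auto
  then show "\<exists>y. (f has_real_derivative y) (at t) \<and> y \<le> 0"
    using deriv[of t] nonpos[OF t] t \<open>0 \<le> s\<close> by auto
next
  have "continuous_on {0..} f"
    using deriv by (auto simp: continuous_on_eq_continuous_within intro: DERIV_continuous)
  then show "continuous_on {s..u} f"
    by (rule continuous_on_subset) (use \<open>0 \<le> s\<close> in auto)
qed

lemma mono_if_derivative_nonneg:
  fixes f :: "real \<Rightarrow> real"
  assumes deriv: "\<And>t. t \<ge> 0 \<Longrightarrow> (f has_real_derivative f' t) (at t within {0..})"
    and nonneg: "\<And>t. s < t \<Longrightarrow> t < u \<Longrightarrow> f' t \<ge> 0" and "0 \<le> s" "s \<le> u"
  shows "f s \<le> f u"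
proof -
  have "- f u \<le> - f s"
  proof (rule antimono_if_derivative_nonpos[OF _ _ \<open>0 \<le> s\<close> \<open>s \<le> u\<close>])
    show "((\<lambda>t. - f t) has_real_derivative - f' t) (at t within {0..})" if "t \<ge> 0" for t
      using deriv[OF that] by (rule DERIV_minus)
    show "- f' t \<le> 0" if "s < t" "t < u" for t
      using nonneg[OF that] by simp
  qed
  then show ?thesis by simp
qed

lemma tendsto_at_top_if_mono_bounded:
  fixes f :: "real \<Rightarrow> real"
  assumes mono: "\<And>s t. 0 \<le> s \<Longrightarrow> s \<le> t \<Longrightarrow> f s \<le> f t" and bound: "\<And>t. 0 \<le> t \<Longrightarrow> f t \<le> B"
  shows "\<exists>L. (f \<longlongrightarrow> L) at_top"
proof -
  have bdd: "bdd_above (f ` {0..})"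
    by (rule bdd_aboveI2[where M=B]) (simp add: bound)
  have "(f \<longlongrightarrow> Sup (f ` {0..})) at_top"
  proof (rule increasing_tendsto)
    show "\<forall>\<^sub>F t in at_top. f t \<le> Sup (f ` {0..})"
      using bdd by (auto simp: eventually_at_top_linorder intro!: exI[of _ 0] intro: cSup_upper)
  next
    fix x assume "x < Sup (f ` {0..})"
    then obtain t0 where "t0 \<ge> 0" "x < f t0"
      by (subst (asm) less_cSup_iff) (auto simp: bdd)
    then show "\<forall>\<^sub>F t in at_top. x < f t"
      unfolding eventually_at_top_linorder by (intro exI[of _ t0]) (auto intro: less_le_trans mono)
  qed
  then show ?thesis ..
qed

lemma has_real_derivative_integral_upto:
  fixes g :: "real \<Rightarrow> real"
  assumes "continuous_on {0..} g" and "t \<ge> 0"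
  shows "((\<lambda>u. integral {0..u} g) has_real_derivative g t) (at t within {0..})"
proof -
  have "((\<lambda>u. integral {0..u} g) has_vector_derivative g t) (at t within {0..t+1})"
    using assms by (intro integral_has_vector_derivative continuous_on_subset[OF assms(1)]) auto
  moreover have "at t within {0..t+1} = at t within {0..}"
    by (rule at_within_nhd[of _ "{..<t+1}"]) auto
  ultimately show ?thesis
    by (simp add: has_real_derivative_iff_has_vector_derivative)
qed

lemma integral_upto_le_integral_atLeast:
  fixes g :: "real \<Rightarrow> real"
  assumes "continuous_on {0..} g" "\<And>t. t \<ge> 0 \<Longrightarrow> g t \<ge> 0" "g integrable_on {0..}" and "t \<ge> 0"
  shows "integral {0..t} g \<le> integral {0..} g"
  using assms by (intro integral_subset_le integrable_continuous_real continuous_on_subset[OF assms(1)]) auto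

lemma convergent_at_top_if_derivative_dominated:
  fixes f g :: "real \<Rightarrow> real"
  assumes deriv: "\<And>t. t \<ge> 0 \<Longrightarrow> (f has_real_derivative f' t) (at t within {0..})"
    and dominated: "\<And>t. t \<ge> 0 \<Longrightarrow> \<bar>f' t\<bar> \<le> g t"
    and "continuous_on {0..} g" "g integrable_on {0..}"
  shows "\<exists>L. (f \<longlongrightarrow> L) at_top"
proof -
  define G where "G t = integral {0..t} g" for t
  have G_deriv: "(G has_real_derivative g t) (at t within {0..})" if "t \<ge> 0" for t
    unfolding G_def[abs_def] using assms(3) that by (rule has_real_derivative_integral_upto)
  have g_nonneg: "g t \<ge> 0" if "t \<ge> 0" for t
    using dominated[OF that] by linarith
  have G_bound: "G t \<le> integral {0..} g" if "t \<ge> 0" for t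
    unfolding G_def using assms(3) g_nonneg assms(4) that by (rule integral_upto_le_integral_atLeast)
  have G_mono: "G s \<le> G t" if "0 \<le> s" "s \<le> t" for s t
  proof (rule mono_if_derivative_nonneg[OF G_deriv _ that])
    show "g u \<ge> 0" if "s < u" for u
      using g_nonneg[of u] that \<open>0 \<le> s\<close> by simp
  qed
  have sum_mono: "f s + G s \<le> f t + G t" if "0 \<le> s" "s \<le> t" for s t
  proof (rule mono_if_derivative_nonneg[OF DERIV_add[OF deriv G_deriv] _ that])
    show "f' u + g u \<ge> 0" if "s < u" for u
      using dominated[of u] that \<open>0 \<le> s\<close> by (simp add: abs_le_iff)
  qed
  have diff_antimono: "f t - G t \<le> f 0 - G 0" if "0 \<le> t" for t
  proof (rule antimono_if_derivative_nonpos[OF DERIV_diff[OF deriv G_deriv] _ order_refl that])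
    show "f' u - g u \<le> 0" if "0 < u" for u
      using dominated[of u] that by (simp add: abs_le_iff)
  qed
  have sum_bound: "f t + G t \<le> f 0 + 2 * integral {0..} g" if "0 \<le> t" for t
    using diff_antimono[OF that] G_bound[OF that] by (simp add: G_def)
  obtain L1 where L1: "((\<lambda>t. f t + G t) \<longlongrightarrow> L1) at_top"
    using tendsto_at_top_if_mono_bounded[of "\<lambda>t. f t + G t", OF sum_mono sum_bound] by blast
  obtain L2 where L2: "(G \<longlongrightarrow> L2) at_top"
    using tendsto_at_top_if_mono_bounded[of G, OF G_mono G_bound] by blast
  have "((\<lambda>t. (f t + G t) - G t) \<longlongrightarrow> L1 - L2) at_top"
    by (intro tendsto_diff L1 L2)
  then show ?thesis by auto
qed

lemma le_max_if_derivative_le_linear_decay: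
  fixes f :: "real \<Rightarrow> real"
  assumes deriv: "\<And>t. t \<ge> 0 \<Longrightarrow> (f has_real_derivative f' t) (at t within {0..})"
    and decay: "\<And>t. T < t \<Longrightarrow> f' t \<le> - a * (f t - c)"
    and "a \<ge> 0" "0 \<le> T" "T \<le> t"
  shows "f t \<le> max (f T) c"
proof -
  define h where "h u = (f u - c) * exp (a * u)" for u
  have "h t \<le> h T"
  proof (rule antimono_if_derivative_nonpos[OF _ _ \<open>0 \<le> T\<close> \<open>T \<le> t\<close>])
    show "(h has_real_derivative (f' u + a * (f u - c)) * exp (a * u)) (at u within {0..})"
      if "u \<ge> 0" for u
      unfolding h_def[abs_def]
      by (rule DERIV_cong[OF DERIV_mult[OF DERIV_diff[OF deriv[OF that] DERIV_const]
            DERIV_chain2[OF DERIV_exp DERIV_cmult[OF DERIV_ident]]]])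
        (simp add: algebra_simps)
    show "(f' u + a * (f u - c)) * exp (a * u) \<le> 0" if "T < u" for u
      using decay[OF that] by (simp add: mult_nonpos_nonneg)
  qed
  then have h_le: "(f t - c) * exp (a * t) \<le> (f T - c) * exp (a * T)"
    by (simp add: h_def)
  show ?thesis
  proof (cases "f t \<le> c")
    case False
    have "(f t - c) * exp (a * T) \<le> (f t - c) * exp (a * t)"
      using False assms(3,5) by (intro mult_left_mono) (auto simp: mult_left_mono)
    with h_le have "(f t - c) * exp (a * T) \<le> (f T - c) * exp (a * T)"
      by linarith
    then show ?thesis by simp
  qed simp
qed

lemma bounded_image_atLeast_if_eventually_bounded:
  fixes f :: "real \<Rightarrow> 'a::real_normed_vector"
  assumes "continuous_on {0..} f" and "\<And>t. T \<le> t \<Longrightarrow> norm (f t) \<le> M"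
  shows "bounded (f ` {0..})"
proof -
  have "continuous_on {0..T} f"
    using assms(1) by (rule continuous_on_subset) auto
  then have "bounded (f ` {0..T})"
    by (intro compact_imp_bounded compact_continuous_image compact_Icc)
  moreover have "bounded (f ` {T..})"
    using assms(2) by (auto simp: bounded_iff)
  moreover have "f ` {0..} \<subseteq> f ` {0..T} \<union> f ` {T..}"
    unfolding image_Un[symmetric] by (rule image_mono) auto
  ultimately show ?thesis
    by (meson bounded_Un bounded_subset)
qed

lemma at_within_atLeast_nontrivial:
  fixes t :: real
  assumes "a \<le> t"
  shows "at t within {a..} \<noteq> bot"
proof -
  have "t \<in> closure {t<..}" by simp
  moreover have "{t<..} \<subseteq> {a..} - {t}" using assms by auto
  ultimately show ?thesis
    unfolding at_within_eq_bot_iff by (meson closure_mono subsetD)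
qed

section \<open>The continuous-time estimator\<close>

locale ct_regressor_filter =
  fixes \<phi> :: "real \<Rightarrow> real^'q" and \<gamma>g :: "real \<Rightarrow> real" and \<Phi> :: "real \<Rightarrow> real^'q^'q"
  assumes regressor_bounded: "bounded (\<phi> ` {0..})"
    and gain_continuous: "continuous_on {0..} \<gamma>g"
    and gain_pos: "\<And>t. t \<ge> 0 \<Longrightarrow> \<gamma>g t > 0"
    and gain_integrable: "\<gamma>g integrable_on {0..}"
    and Phi_0: "\<Phi> 0 = mat 1"
    and Phi_deriv: "\<And>t. t \<ge> 0 \<Longrightarrow>
      (\<Phi> has_vector_derivative - (\<gamma>g t *\<^sub>R (outer (\<phi> t) ** \<Phi> t))) (at t within {0..})"
begin

lemma Phi_mult_vector_deriv:
  assumes "t \<ge> 0"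
  shows "((\<lambda>t. \<Phi> t *v x) has_vector_derivative - (\<gamma>g t * (\<phi> t \<bullet> (\<Phi> t *v x))) *\<^sub>R \<phi> t)
    (at t within {0..})"
proof -
  have "(- (\<gamma>g t *\<^sub>R (outer (\<phi> t) ** \<Phi> t))) *v x = - (\<gamma>g t *\<^sub>R ((outer (\<phi> t) ** \<Phi> t) *v x))"
    by (simp add: vec_eq_iff matrix_vector_mult_def sum_negf sum_distrib_left mult.assoc)
  also have "\<dots> = - (\<gamma>g t *\<^sub>R (outer (\<phi> t) *v (\<Phi> t *v x)))"
    by (simp add: matrix_vector_mul_assoc)
  finally show ?thesis
    using has_vector_derivative_matrix_vector_mult[OF Phi_deriv[OF assms], of x]
    by (simp add: outer_mult_vector)
qed

lemma norm_Phi_mult_vector_antimono: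
  assumes "0 \<le> s" "s \<le> t"
  shows "norm (\<Phi> t *v x) \<le> norm (\<Phi> s *v x)"
proof -
  have "(\<Phi> t *v x) \<bullet> (\<Phi> t *v x) \<le> (\<Phi> s *v x) \<bullet> (\<Phi> s *v x)"
  proof (rule antimono_if_derivative_nonpos[OF _ _ assms])
    show "((\<lambda>t. (\<Phi> t *v x) \<bullet> (\<Phi> t *v x)) has_real_derivative
        2 * ((\<Phi> u *v x) \<bullet> (- (\<gamma>g u * (\<phi> u \<bullet> (\<Phi> u *v x))) *\<^sub>R \<phi> u))) (at u within {0..})"
      if "u \<ge> 0" for u
      using that by (intro has_real_derivative_inner_self Phi_mult_vector_deriv)
    show "2 * ((\<Phi> u *v x) \<bullet> (- (\<gamma>g u * (\<phi> u \<bullet> (\<Phi> u *v x))) *\<^sub>R \<phi> u)) \<le> 0" if "s < u" for u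
      using gain_pos[of u] that assms by (simp add: inner_commute)
  qed
  then show ?thesis by (simp add: norm_le)
qed

lemma norm_Phi_mult_vector_le: "t \<ge> 0 \<Longrightarrow> norm (\<Phi> t *v x) \<le> norm x"
  using norm_Phi_mult_vector_antimono[of 0 t x] by (simp add: Phi_0)

lemma Phi_convergent: "\<exists>P. (\<Phi> \<longlongrightarrow> P) at_top"
proof (rule tendsto_matrix_if_entries_converge)
  fix i j
  obtain C where "C > 0" and C: "\<And>t. t \<ge> 0 \<Longrightarrow> norm (\<phi> t) \<le> C"
    using regressor_bounded by (auto simp: bounded_pos)
  define e :: "real^'q" where "e = axis j 1"
  define u' where "u' t = - (\<gamma>g t * (\<phi> t \<bullet> (\<Phi> t *v e))) * \<phi> t $ i" for t
  have entry: "\<Phi> t $ i $ j = (\<Phi> t *v e) $ i" for t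
    by (simp add: e_def matrix_vector_mult_basis column_def)
  have "((\<lambda>t. (\<Phi> t *v e) $ i) has_real_derivative u' t) (at t within {0..})" if "t \<ge> 0" for t
    using bounded_linear.has_vector_derivative[OF bounded_linear_vec_nth Phi_mult_vector_deriv[OF that]]
    by (simp add: u'_def has_real_derivative_iff_has_vector_derivative)
  moreover have "\<bar>u' t\<bar> \<le> C\<^sup>2 * \<gamma>g t" if "t \<ge> 0" for t
  proof -
    have "\<bar>\<phi> t \<bullet> (\<Phi> t *v e)\<bar> \<le> norm (\<phi> t) * norm (\<Phi> t *v e)"
      by (rule Cauchy_Schwarz_ineq2)
    also have "\<dots> \<le> C * 1"
      using C[OF that] norm_Phi_mult_vector_le[OF that, of e] \<open>C > 0\<close>
      by (intro mult_mono) (auto simp: e_def)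
    finally have "\<bar>\<phi> t \<bullet> (\<Phi> t *v e)\<bar> \<le> C" by simp
    moreover have "\<bar>\<phi> t $ i\<bar> \<le> C"
      using component_le_norm_cart[of "\<phi> t" i] C[OF that] by simp
    ultimately show ?thesis
      using gain_pos[OF that] \<open>C > 0\<close>
      by (simp add: u'_def abs_mult power2_eq_square mult_mono mult_left_mono)
  qed
  moreover have "continuous_on {0..} (\<lambda>t. C\<^sup>2 * \<gamma>g t)"
    by (intro continuous_intros gain_continuous)
  moreover have "(\<lambda>t. C\<^sup>2 * \<gamma>g t) integrable_on {0..}"
    using integrable_cmul[OF gain_integrable, of "C\<^sup>2"] by simp
  ultimately show "\<exists>l. ((\<lambda>t. \<Phi> t $ i $ j) \<longlongrightarrow> l) at_top"
    unfolding entry by (rule convergent_at_top_if_derivative_dominated)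
qed

lemma norm_Phi_mult_vector_eq_if_limit_fixed:
  assumes lim: "(\<Phi> \<longlongrightarrow> P) at_top" and fixed: "P *v v = v" and "t \<ge> 0"
  shows "norm (\<Phi> t *v v) = norm v"
proof (rule antisym)
  show "norm (\<Phi> t *v v) \<le> norm v"
    using \<open>t \<ge> 0\<close> by (rule norm_Phi_mult_vector_le)
  have "norm (P *v v) \<le> norm (\<Phi> t *v v)"
  proof (rule tendsto_upperbound[OF tendsto_norm[OF tendsto_matrix_vector_mult_left[OF lim]]])
    show "\<forall>\<^sub>F s in at_top. norm (\<Phi> s *v v) \<le> norm (\<Phi> t *v v)"
      unfolding eventually_at_top_linorder
      using norm_Phi_mult_vector_antimono \<open>t \<ge> 0\<close> by (intro exI[of _ t]) auto
  qed simp
  then show "norm v \<le> norm (\<Phi> t *v v)"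
    by (simp add: fixed)
qed

text \<open>A direction fixed by the limit keeps its length along the whole trajectory, so the
  derivative \<open>-2 \<gamma>g (\<phi> \<bullet> \<Phi> v)\<^sup>2\<close> of its squared length vanishes.\<close>

lemma regressor_orthogonal_if_limit_fixed:
  assumes lim: "(\<Phi> \<longlongrightarrow> P) at_top" and fixed: "P *v v = v" and "t \<ge> 0"
  shows "\<phi> t \<bullet> (\<Phi> t *v v) = 0"
proof -
  define H where "H = 2 * ((\<Phi> t *v v) \<bullet> (- (\<gamma>g t * (\<phi> t \<bullet> (\<Phi> t *v v))) *\<^sub>R \<phi> t))"
  have "((\<lambda>s. (\<Phi> s *v v) \<bullet> (\<Phi> s *v v)) has_real_derivative H) (at t within {0..})"
    unfolding H_def using \<open>t \<ge> 0\<close> by (intro has_real_derivative_inner_self Phi_mult_vector_deriv)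
  then have "((\<lambda>s. v \<bullet> v) has_real_derivative H) (at t within {0..})"
    by (rule has_field_derivative_transform_within[OF _ zero_less_one])
      (use \<open>t \<ge> 0\<close> norm_Phi_mult_vector_eq_if_limit_fixed[OF lim fixed] in
        \<open>auto simp: dot_square_norm\<close>)
  then have "H = 0"
    using vector_derivative_unique_within[OF at_within_atLeast_nontrivial[OF \<open>t \<ge> 0\<close>]]
    by (metis has_real_derivative_iff_has_vector_derivative DERIV_const)
  then have "\<gamma>g t * (\<phi> t \<bullet> (\<Phi> t *v v))\<^sup>2 = 0"
    by (simp add: H_def inner_commute power2_eq_square)
  then show ?thesis
    using gain_pos[OF \<open>t \<ge> 0\<close>] by simp
qed

lemma Phi_fixed_if_limit_fixed:
  assumes lim: "(\<Phi> \<longlongrightarrow> P) at_top" and fixed: "P *v v = v" and "t \<ge> 0"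
  shows "\<Phi> t *v v = v"
proof -
  have "((\<lambda>s. \<Phi> s *v v) has_vector_derivative 0) (at s within {0..})" if "s \<in> {0..}" for s
    using Phi_mult_vector_deriv[of s v] regressor_orthogonal_if_limit_fixed[OF lim fixed, of s] that
    by simp
  then obtain c where "\<And>s. s \<in> {0..} \<Longrightarrow> \<Phi> s *v v = c"
    using has_vector_derivative_zero_constant[OF convex_real_interval(1)] by blast
  from this[of t] this[of 0] \<open>t \<ge> 0\<close> show ?thesis
    by (simp add: Phi_0)
qed

lemma det_limit_nonzero:
  fixes \<tau> :: "'q \<Rightarrow> real"
  assumes lim: "(\<Phi> \<longlongrightarrow> P) at_top"
    and rank: "rank (\<chi> i j. \<phi> (\<tau> j) $ i) = CARD('q)" and "\<And>j. \<tau> j \<ge> 0"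
  shows "det (mat 1 - P) \<noteq> 0"
proof
  assume "det (mat 1 - P) = 0"
  then obtain v where "v \<noteq> 0" and "(mat 1 - P) *v v = 0"
    by (rule det_eq_0_obtains_kernel)
  then have fixed: "P *v v = v"
    by (simp add: matrix_vector_mult_diff_rdistrib)
  have "\<phi> (\<tau> j) \<bullet> v = 0" for j
    using regressor_orthogonal_if_limit_fixed[OF lim fixed] Phi_fixed_if_limit_fixed[OF lim fixed] \<open>\<tau> j \<ge> 0\<close>
    by metis
  with rank have "v = 0"
    by (rule orthogonal_to_full_rank_columns[where u = "\<lambda>j. \<phi> (\<tau> j)"])
  with \<open>v \<noteq> 0\<close> show False ..
qed

end

lemma quadratic_decay_bound:
  fixes \<Delta> p n B \<delta> \<gamma> :: real
  assumes "\<delta> > 0" "\<gamma> \<ge> 0" "\<delta> \<le> \<bar>\<Delta>\<bar>" "\<Delta> * p \<le> B * n" "n \<ge> 0"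
  shows "2 * \<gamma> * (\<Delta> * p - \<Delta>\<^sup>2 * n\<^sup>2) \<le> - (\<gamma> * \<delta>\<^sup>2) * (n\<^sup>2 - (B / \<delta>\<^sup>2)\<^sup>2)"
proof -
  have "\<delta>\<^sup>2 * n\<^sup>2 \<le> \<Delta>\<^sup>2 * n\<^sup>2"
    using assms(1,3) by (intro mult_right_mono) (auto simp: abs_le_square_iff[symmetric])
  then have "\<Delta> * p - \<Delta>\<^sup>2 * n\<^sup>2 \<le> B * n - \<delta>\<^sup>2 * n\<^sup>2"
    using assms(4) by linarith
  also have "\<dots> \<le> - (\<delta>\<^sup>2 / 2) * (n\<^sup>2 - (B / \<delta>\<^sup>2)\<^sup>2)"
  proof -
    have "0 \<le> (\<delta> * n - B / \<delta>)\<^sup>2 / 2" by simp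
    also have "\<dots> = - (\<delta>\<^sup>2 / 2) * (n\<^sup>2 - (B / \<delta>\<^sup>2)\<^sup>2) - (B * n - \<delta>\<^sup>2 * n\<^sup>2)"
      using assms(1) by (simp add: field_simps power2_eq_square)
    finally show ?thesis by simp
  qed
  finally have "\<Delta> * p - \<Delta>\<^sup>2 * n\<^sup>2 \<le> - (\<delta>\<^sup>2 / 2) * (n\<^sup>2 - (B / \<delta>\<^sup>2)\<^sup>2)" .
  from mult_left_mono[OF this, of "2 * \<gamma>"] assms(2) show ?thesis
    by (simp add: algebra_simps)
qed

locale ct_estimator = ct_regressor_filter \<phi> \<gamma>g \<Phi>
  for \<phi> :: "real \<Rightarrow> real^'q" and \<gamma>g \<Phi> +
  fixes \<theta> :: "real^'q" and d :: "real \<Rightarrow> real" and \<gamma> :: real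
    and \<theta>g0 :: "real^'q" and \<theta>g \<theta>h :: "real \<Rightarrow> real^'q"
  assumes disturbance_bounded: "bounded (d ` {0..})"
    and exciting: "\<exists>\<tau>::'q \<Rightarrow> real. (\<forall>j. \<tau> j \<ge> 0) \<and> rank (\<chi> i j. \<phi> (\<tau> j) $ i) = CARD('q)"
    and gamma_pos: "\<gamma> > 0"
    and thetag_0: "\<theta>g 0 = \<theta>g0"
    and thetag_deriv: "\<And>t. t \<ge> 0 \<Longrightarrow> (\<theta>g has_vector_derivative
      - (\<gamma>g t *\<^sub>R (outer (\<phi> t) *v \<theta>g t)) + (\<gamma>g t * (\<phi> t \<bullet> \<theta> + d t)) *\<^sub>R \<phi> t) (at t within {0..})"
    and thetah_deriv: "\<And>t. t \<ge> 0 \<Longrightarrow> (\<theta>h has_vector_derivative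
      (\<gamma> * det (mat 1 - \<Phi> t)) *\<^sub>R
        (adjugate (mat 1 - \<Phi> t) *v (\<theta>g t - \<Phi> t *v \<theta>g0) - det (mat 1 - \<Phi> t) *\<^sub>R \<theta>h t))
      (at t within {0..})"
begin

text \<open>Without disturbance \<open>\<theta>g - \<Phi> \<theta>g0\<close> would equal \<open>(I - \<Phi>) \<theta>\<close>; the filtered error is the deviation
  from this caused by \<open>d\<close>.\<close>

definition filtered_error :: "real \<Rightarrow> real^'q" where
  "filtered_error t = \<theta>g t - \<Phi> t *v \<theta>g0 - \<theta> + \<Phi> t *v \<theta>"

lemma filtered_error_0: "filtered_error 0 = 0"
  by (simp add: filtered_error_def thetag_0 Phi_0)

lemma filtered_error_deriv:
  assumes "t \<ge> 0"
  shows "(filtered_error has_vector_derivative (\<gamma>g t * (d t - \<phi> t \<bullet> filtered_error t)) *\<^sub>R \<phi> t)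
    (at t within {0..})"
proof -
  have "(filtered_error has_vector_derivative
      (- (\<gamma>g t *\<^sub>R (outer (\<phi> t) *v \<theta>g t)) + (\<gamma>g t * (\<phi> t \<bullet> \<theta> + d t)) *\<^sub>R \<phi> t)
      - (- (\<gamma>g t * (\<phi> t \<bullet> (\<Phi> t *v \<theta>g0)))) *\<^sub>R \<phi> t - 0
      + (- (\<gamma>g t * (\<phi> t \<bullet> (\<Phi> t *v \<theta>)))) *\<^sub>R \<phi> t) (at t within {0..})"
    unfolding filtered_error_def[abs_def] using assms
    by (intro has_vector_derivative_add has_vector_derivative_diff thetag_deriv
        Phi_mult_vector_deriv has_vector_derivative_const)
  then show ?thesis
    by (simp add: filtered_error_def outer_mult_vector inner_diff_right inner_add_right algebra_simps)
qed

lemma filtered_error_bounded: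
  obtains W where "\<And>t. t \<ge> 0 \<Longrightarrow> norm (filtered_error t) \<le> W"
proof -
  obtain Md where Md: "\<And>t. t \<ge> 0 \<Longrightarrow> \<bar>d t\<bar> \<le> Md"
    using disturbance_bounded by (auto simp: bounded_iff)
  define G where "G t = integral {0..t} \<gamma>g" for t
  define f where "f t = filtered_error t \<bullet> filtered_error t - Md\<^sup>2 / 2 * G t" for t
  have "f t \<le> f 0" if "t \<ge> 0" for t
  proof (rule antimono_if_derivative_nonpos[OF _ _ order_refl that])
    let ?w = "filtered_error" and ?a = "\<lambda>u. \<phi> u \<bullet> filtered_error u"
    show "(f has_real_derivative 2 * (?w u \<bullet> ((\<gamma>g u * (d u - ?a u)) *\<^sub>R \<phi> u)) - Md\<^sup>2 / 2 * \<gamma>g u)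
        (at u within {0..})" if "u \<ge> 0" for u
      unfolding f_def[abs_def] G_def using that
      by (intro DERIV_diff DERIV_cmult has_real_derivative_inner_self filtered_error_deriv
          has_real_derivative_integral_upto gain_continuous)
    show "2 * (?w u \<bullet> ((\<gamma>g u * (d u - ?a u)) *\<^sub>R \<phi> u)) - Md\<^sup>2 / 2 * \<gamma>g u \<le> 0" if "0 < u" for u
    proof -
      have "2 * (d u * ?a u) - 2 * (?a u)\<^sup>2 \<le> (d u)\<^sup>2 / 2"
        using sum_squares_bound[of "2 * ?a u" "d u"] by (simp add: power2_eq_square algebra_simps)
      also have "\<dots> \<le> Md\<^sup>2 / 2"
        using Md[of u] that by (simp add: abs_le_square_iff[symmetric] power_mono)
      finally have "\<gamma>g u * (2 * (d u * ?a u) - 2 * (?a u)\<^sup>2) \<le> \<gamma>g u * (Md\<^sup>2 / 2)"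
        using gain_pos[of u] that by (intro mult_left_mono) auto
      then show ?thesis
        by (simp add: inner_commute power2_eq_square algebra_simps)
    qed
  qed
  moreover have "G t \<le> integral {0..} \<gamma>g" if "t \<ge> 0" for t
    unfolding G_def using gain_continuous gain_pos that
    by (intro integral_upto_le_integral_atLeast gain_integrable) (auto intro: less_imp_le)
  ultimately have "(norm (filtered_error t))\<^sup>2 \<le> Md\<^sup>2 / 2 * integral {0..} \<gamma>g" if "t \<ge> 0" for t
    using that by (fastforce simp: f_def G_def filtered_error_0 dot_square_norm intro: order_trans mult_left_mono)
  then show thesis
    by (intro that[of "sqrt (Md\<^sup>2 / 2 * integral {0..} \<gamma>g)"] real_le_rsqrt)
qed

lemma error_deriv:
  assumes "t \<ge> 0"
  shows "((\<lambda>t. \<theta>h t - \<theta>) has_vector_derivative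
    (\<gamma> * det (mat 1 - \<Phi> t)) *\<^sub>R
      (adjugate (mat 1 - \<Phi> t) *v filtered_error t - det (mat 1 - \<Phi> t) *\<^sub>R (\<theta>h t - \<theta>)))
    (at t within {0..})"
  using has_vector_derivative_diff[OF thetah_deriv[OF assms] has_vector_derivative_const[of \<theta>]]
  by (simp add: adjugate_estimator_identity[where \<theta> = \<theta>] filtered_error_def)

lemma filter_eventually_invertible:
  obtains \<delta> A T D where "\<delta> > 0" "A \<ge> 0" "T \<ge> 0"
    "\<And>t. T \<le> t \<Longrightarrow> \<delta> \<le> \<bar>det (mat 1 - \<Phi> t)\<bar> \<and> \<bar>det (mat 1 - \<Phi> t)\<bar> \<le> D \<and>
      (\<forall>x. norm (adjugate (mat 1 - \<Phi> t) *v x) \<le> A * norm x)"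
proof -
  obtain P where lim: "(\<Phi> \<longlongrightarrow> P) at_top"
    using Phi_convergent ..
  have "((\<lambda>t. mat 1 - \<Phi> t) \<longlongrightarrow> mat 1 - P) at_top"
    by (intro tendsto_intros lim)
  moreover have "det (mat 1 - P) \<noteq> 0"
    using exciting det_limit_nonzero[OF lim] by blast
  ultimately obtain \<delta> D A where "\<delta> > 0" "A \<ge> 0" and "\<forall>\<^sub>F t in at_top.
      \<delta> \<le> \<bar>det (mat 1 - \<Phi> t)\<bar> \<and> \<bar>det (mat 1 - \<Phi> t)\<bar> \<le> D \<and>
      (\<forall>x. norm (adjugate (mat 1 - \<Phi> t) *v x) \<le> A * norm x)"
    by (rule eventually_det_adjugate_bounds)
  then obtain T where "\<And>t. T \<le> t \<Longrightarrow> \<delta> \<le> \<bar>det (mat 1 - \<Phi> t)\<bar> \<and> \<bar>det (mat 1 - \<Phi> t)\<bar> \<le> D \<and>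
      (\<forall>x. norm (adjugate (mat 1 - \<Phi> t) *v x) \<le> A * norm x)"
    unfolding eventually_at_top_linorder by blast
  with \<open>\<delta> > 0\<close> \<open>A \<ge> 0\<close> show thesis
    by (intro that[of \<delta> A "max T 0" D]) auto
qed

lemma error_bounded: "bounded ((\<lambda>t. \<theta>h t - \<theta>) ` {0..})"
proof -
  define e where "e t = \<theta>h t - \<theta>" for t
  define e' where "e' t = (\<gamma> * det (mat 1 - \<Phi> t)) *\<^sub>R
      (adjugate (mat 1 - \<Phi> t) *v filtered_error t - det (mat 1 - \<Phi> t) *\<^sub>R e t)" for t
  have e_deriv: "(e has_vector_derivative e' t) (at t within {0..})" if "t \<ge> 0" for t
    unfolding e_def[abs_def] e'_def e_def using that by (rule error_deriv)
  obtain \<delta> A T D where "\<delta> > 0" "A \<ge> 0" "T \<ge> 0" and T: "\<And>t. T \<le> t \<Longrightarrow>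
      \<delta> \<le> \<bar>det (mat 1 - \<Phi> t)\<bar> \<and> \<bar>det (mat 1 - \<Phi> t)\<bar> \<le> D \<and>
      (\<forall>x. norm (adjugate (mat 1 - \<Phi> t) *v x) \<le> A * norm x)"
    by (rule filter_eventually_invertible) (rule that)
  obtain W where W: "\<And>t. t \<ge> 0 \<Longrightarrow> norm (filtered_error t) \<le> W"
    using filtered_error_bounded by blast
  define c where "c = (D * (A * W) / \<delta>\<^sup>2)\<^sup>2"
  have decay: "2 * (e t \<bullet> e' t) \<le> - (\<gamma> * \<delta>\<^sup>2) * (e t \<bullet> e t - c)" if "T < t" for t
  proof -
    let ?\<Delta> = "det (mat 1 - \<Phi> t)" and ?p = "e t \<bullet> (adjugate (mat 1 - \<Phi> t) *v filtered_error t)"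
    have "norm (adjugate (mat 1 - \<Phi> t) *v filtered_error t) \<le> A * W"
      using T[of t] W[of t] mult_left_mono[OF W \<open>A \<ge> 0\<close>] that \<open>T \<ge> 0\<close> by (meson order_trans less_imp_le)
    then have "\<bar>?p\<bar> \<le> norm (e t) * (A * W)"
      using Cauchy_Schwarz_ineq2 by (meson mult_left_mono norm_ge_zero order_trans)
    moreover have "?\<Delta> * ?p \<le> \<bar>?\<Delta>\<bar> * \<bar>?p\<bar>"
      by (simp add: abs_mult[symmetric])
    ultimately have "?\<Delta> * ?p \<le> D * (A * W) * norm (e t)"
      using T[of t] that by (smt (verit) abs_ge_zero mult.assoc mult.commute mult_mono)
    then have "2 * \<gamma> * (?\<Delta> * ?p - ?\<Delta>\<^sup>2 * (norm (e t))\<^sup>2) \<le> - (\<gamma> * \<delta>\<^sup>2) * ((norm (e t))\<^sup>2 - c)"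
      unfolding c_def using \<open>\<delta> > 0\<close> gamma_pos T[of t] that by (intro quadratic_decay_bound) auto
    then show ?thesis
      by (simp add: e'_def dot_square_norm inner_diff_right power2_eq_square algebra_simps)
  qed
  have "e t \<bullet> e t \<le> max (e T \<bullet> e T) c" if "T \<le> t" for t
  proof (rule le_max_if_derivative_le_linear_decay[OF _ decay])
    show "((\<lambda>t. e t \<bullet> e t) has_real_derivative 2 * (e u \<bullet> e' u)) (at u within {0..})" if "u \<ge> 0" for u
      using e_deriv[OF that] by (rule has_real_derivative_inner_self)
  qed (use \<open>\<delta> > 0\<close> \<open>T \<ge> 0\<close> gamma_pos that in auto)
  then have "norm (e t) \<le> sqrt (max (e T \<bullet> e T) c)" if "T \<le> t" for t
    using that by (simp add: norm_eq_sqrt_inner)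
  moreover have "continuous_on {0..} e"
    using e_deriv by (intro continuous_on_vector_derivative) auto
  ultimately have "bounded (e ` {0..})"
    by (intro bounded_image_atLeast_if_eventually_bounded)
  then show ?thesis
    by (simp add: e_def[abs_def])
qed

end

section \<open>The discrete-time estimator\<close>

lemma convergent_if_summable_differences:
  fixes f :: "nat \<Rightarrow> 'a::real_normed_vector"
  assumes "summable (\<lambda>k. f (Suc k) - f k)"
  shows "convergent f"
proof -
  have "convergent (\<lambda>n. f 0 + (\<Sum>k<n. f (Suc k) - f k))"
    using assms by (simp add: summable_iff_convergent convergent_add_const_iff)
  then show ?thesis
    by (simp add: sum_lessThan_telescope)
qed

lemma norm_rank_one_update_le:
  fixes y p :: "'a::real_inner"
  assumes "0 \<le> g" "g * (norm p)\<^sup>2 \<le> 1"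
  shows "(norm (y - (g * (p \<bullet> y)) *\<^sub>R p))\<^sup>2 \<le> (norm y)\<^sup>2 - g * (p \<bullet> y)\<^sup>2"
proof -
  have "(norm (y - (g * (p \<bullet> y)) *\<^sub>R p))\<^sup>2 = y \<bullet> y - 2 * g * (p \<bullet> y)\<^sup>2 + (g * (p \<bullet> y)\<^sup>2) * (g * (p \<bullet> p))"
    unfolding power2_norm_eq_inner
    by (simp add: inner_diff_left inner_diff_right inner_commute power2_eq_square algebra_simps)
  also have "(g * (p \<bullet> y)\<^sup>2) * (g * (p \<bullet> p)) \<le> g * (p \<bullet> y)\<^sup>2"
    using assms by (intro mult_left_le) (auto simp: power2_norm_eq_inner)
  finally show ?thesis by (simp add: power2_norm_eq_inner)
qed

lemma le_max_if_affine_contraction: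
  fixes x :: "nat \<Rightarrow> real"
  assumes step: "\<And>k. T \<le> k \<Longrightarrow> x (Suc k) \<le> \<rho> * x k + B" and "0 \<le> \<rho>" "\<rho> < 1" and "T \<le> k"
  shows "x k \<le> max (x T) (B / (1 - \<rho>))"
  using \<open>T \<le> k\<close>
proof (induction k rule: dec_induct)
  case (step k)
  let ?M = "max (x T) (B / (1 - \<rho>))"
  have "x (Suc k) \<le> \<rho> * ?M + B"
    using assms(1)[OF step.hyps(1)] mult_left_mono[OF step.IH \<open>0 \<le> \<rho>\<close>] by linarith
  also have "\<dots> \<le> ?M"
  proof -
    have "B / (1 - \<rho>) \<le> ?M" by simp
    then have "B \<le> (1 - \<rho>) * ?M"
      using \<open>\<rho> < 1\<close> by (metis pos_divide_le_eq diff_gt_0_iff_gt mult.commute)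
    then show ?thesis by (simp add: algebra_simps)
  qed
  finally show ?case .
qed simp

lemma bounded_range_if_eventually_bounded:
  fixes f :: "nat \<Rightarrow> 'a::real_normed_vector"
  assumes "\<And>k. T \<le> k \<Longrightarrow> norm (f k) \<le> M"
  shows "bounded (range f)"
proof -
  have "bounded (f ` {..<T})"
    by (rule finite_imp_bounded) simp
  moreover have "bounded (f ` {T..})"
    using assms by (auto simp: bounded_iff)
  moreover have "range f \<subseteq> f ` {..<T} \<union> f ` {T..}"
    unfolding image_Un[symmetric] by (rule image_mono) auto
  ultimately show ?thesis
    by (meson bounded_Un bounded_subset)
qed

lemma identity_minus_outer_mult_vector:
  "(mat 1 - c *\<^sub>R outer p) *v x = x - (c * (p \<bullet> x)) *\<^sub>R p"
  by (simp add: matrix_vector_mult_diff_rdistrib scaleR_matrix_vector_assoc[symmetric] outer_mult_vector)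

locale dt_regressor_filter =
  fixes \<phi> :: "nat \<Rightarrow> real^'q" and \<gamma>g :: "nat \<Rightarrow> real" and \<Phi> :: "nat \<Rightarrow> real^'q^'q"
  assumes regressor_bounded: "bounded (range \<phi>)"
    and gain_pos: "\<And>k. \<gamma>g k > 0"
    and inverse_gain_summable: "summable (\<lambda>k. 1 / \<gamma>g k)"
    and Phi_0: "\<Phi> 0 = mat 1"
    and Phi_Suc: "\<And>k. \<Phi> (Suc k) = (mat 1 - (1 / (\<gamma>g k + (norm (\<phi> k))\<^sup>2)) *\<^sub>R outer (\<phi> k)) ** \<Phi> k"
begin

definition step_gain :: "nat \<Rightarrow> real" where
  "step_gain k = 1 / (\<gamma>g k + (norm (\<phi> k))\<^sup>2)"

lemma step_gain_pos: "step_gain k > 0"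
  using gain_pos[of k] by (simp add: step_gain_def add_pos_nonneg)

lemma step_gain_le: "step_gain k \<le> 1 / \<gamma>g k"
  using gain_pos[of k] by (simp add: step_gain_def frac_le)

lemma step_gain_regressor_le_1: "step_gain k * (norm (\<phi> k))\<^sup>2 \<le> 1"
  using gain_pos[of k] by (simp add: step_gain_def add_pos_nonneg)

lemma Phi_Suc_mult_vector:
  "\<Phi> (Suc k) *v x = \<Phi> k *v x - (step_gain k * (\<phi> k \<bullet> (\<Phi> k *v x))) *\<^sub>R \<phi> k"
  by (simp add: Phi_Suc step_gain_def[symmetric] matrix_vector_mul_assoc[symmetric]
      identity_minus_outer_mult_vector)

lemma norm_Phi_Suc_mult_vector_le:
  "(norm (\<Phi> (Suc k) *v x))\<^sup>2 \<le> (norm (\<Phi> k *v x))\<^sup>2 - step_gain k * (\<phi> k \<bullet> (\<Phi> k *v x))\<^sup>2"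
  unfolding Phi_Suc_mult_vector
  using step_gain_pos[of k] step_gain_regressor_le_1[of k] by (intro norm_rank_one_update_le) auto

lemma norm_Phi_mult_vector_antimono:
  assumes "m \<le> n"
  shows "norm (\<Phi> n *v x) \<le> norm (\<Phi> m *v x)"
proof (rule lift_Suc_antimono_le[of "\<lambda>k. norm (\<Phi> k *v x)", OF _ assms])
  fix k
  have "(norm (\<Phi> (Suc k) *v x))\<^sup>2 \<le> (norm (\<Phi> k *v x))\<^sup>2"
    using norm_Phi_Suc_mult_vector_le[of k x] step_gain_pos[of k]
    by (smt (verit) mult_nonneg_nonneg zero_le_power2)
  then show "norm (\<Phi> (Suc k) *v x) \<le> norm (\<Phi> k *v x)"
    by (simp add: power_mono_iff)
qed

lemma norm_Phi_mult_vector_le: "norm (\<Phi> k *v x) \<le> norm x"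
  using norm_Phi_mult_vector_antimono[of 0 k x] by (simp add: Phi_0)

lemma Phi_convergent: "\<exists>P. \<Phi> \<longlonglongrightarrow> P"
proof (rule tendsto_matrix_if_entries_converge)
  fix i j
  obtain C where C: "\<And>k. norm (\<phi> k) \<le> C"
    using regressor_bounded by (auto simp: bounded_iff)
  define e :: "real^'q" where "e = axis j 1"
  have entry: "\<Phi> k $ i $ j = (\<Phi> k *v e) $ i" for k
    by (simp add: e_def matrix_vector_mult_basis column_def)
  have "norm ((\<Phi> (Suc k) *v e) $ i - (\<Phi> k *v e) $ i) \<le> C\<^sup>2 * (1 / \<gamma>g k)" for k
  proof -
    have "\<bar>\<phi> k \<bullet> (\<Phi> k *v e)\<bar> \<le> C"
      using Cauchy_Schwarz_ineq2[of "\<phi> k" "\<Phi> k *v e"] norm_Phi_mult_vector_le[of k e] C[of k]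
      by (simp add: e_def) (smt (verit) mult_left_le norm_ge_zero)
    moreover have "\<bar>\<phi> k $ i\<bar> \<le> C"
      using component_le_norm_cart[of "\<phi> k" i] C[of k] by simp
    ultimately have "\<bar>step_gain k * (\<phi> k \<bullet> (\<Phi> k *v e)) * \<phi> k $ i\<bar> \<le> step_gain k * (C * C)"
      using step_gain_pos[of k] by (simp add: abs_mult mult_mono)
    also have "\<dots> \<le> 1 / \<gamma>g k * (C * C)"
      using step_gain_le[of k] by (intro mult_right_mono) auto
    finally show ?thesis
      by (simp add: Phi_Suc_mult_vector power2_eq_square mult.commute)
  qed
  then have "summable (\<lambda>k. (\<Phi> (Suc k) *v e) $ i - (\<Phi> k *v e) $ i)"
    by (rule summable_comparison_test'[OF summable_mult[OF inverse_gain_summable]])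
  then show "\<exists>l. (\<lambda>k. \<Phi> k $ i $ j) \<longlonglongrightarrow> l"
    unfolding entry convergent_def[symmetric] by (rule convergent_if_summable_differences)
qed

lemma det_limit_nonzero:
  fixes \<tau> :: "'q \<Rightarrow> nat"
  assumes lim: "\<Phi> \<longlonglongrightarrow> P" and rank: "rank (\<chi> i j. \<phi> (\<tau> j) $ i) = CARD('q)"
  shows "det (mat 1 - P) \<noteq> 0"
proof
  assume "det (mat 1 - P) = 0"
  then obtain v where "v \<noteq> 0" and "(mat 1 - P) *v v = 0"
    by (rule det_eq_0_obtains_kernel)
  then have fixed: "P *v v = v"
    by (simp add: matrix_vector_mult_diff_rdistrib)
  have norm_eq: "norm (\<Phi> k *v v) = norm v" for k
  proof (rule antisym[OF norm_Phi_mult_vector_le])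
    have "norm (P *v v) \<le> norm (\<Phi> k *v v)"
      using norm_Phi_mult_vector_antimono
      by (intro tendsto_upperbound[OF tendsto_norm[OF tendsto_matrix_vector_mult_left[OF lim]]])
        (auto simp: eventually_sequentially)
    then show "norm v \<le> norm (\<Phi> k *v v)"
      by (simp add: fixed)
  qed
  have orthogonal: "\<phi> k \<bullet> (\<Phi> k *v v) = 0" for k
    using norm_Phi_Suc_mult_vector_le[of k v] step_gain_pos[of k]
    by (simp add: norm_eq mult_le_0_iff)
  have Phi_fixed: "\<Phi> k *v v = v" for k
  proof (induction k)
    case (Suc k)
    with orthogonal[of k] show ?case by (simp add: Phi_Suc_mult_vector)
  qed (simp add: Phi_0)
  have "\<phi> (\<tau> j) \<bullet> v = 0" for j
    using orthogonal[of "\<tau> j"] by (simp add: Phi_fixed)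
  with rank have "v = 0"
    by (rule orthogonal_to_full_rank_columns[where u = "\<lambda>j. \<phi> (\<tau> j)"])
  with \<open>v \<noteq> 0\<close> show False ..
qed

end

locale dt_estimator = dt_regressor_filter \<phi> \<gamma>g \<Phi>
  for \<phi> :: "nat \<Rightarrow> real^'q" and \<gamma>g \<Phi> +
  fixes \<theta> :: "real^'q" and d :: "nat \<Rightarrow> real" and \<gamma> :: real
    and \<theta>g0 :: "real^'q" and \<theta>g \<theta>h :: "nat \<Rightarrow> real^'q"
  assumes disturbance_bounded: "bounded (range d)"
    and exciting: "\<exists>\<tau>::'q \<Rightarrow> nat. rank (\<chi> i j. \<phi> (\<tau> j) $ i) = CARD('q)"
    and gamma_pos: "\<gamma> > 0"
    and thetag_0: "\<theta>g 0 = \<theta>g0"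
    and thetag_Suc: "\<And>k. \<theta>g (Suc k) =
      (mat 1 - (1 / (\<gamma>g k + (norm (\<phi> k))\<^sup>2)) *\<^sub>R outer (\<phi> k)) *v \<theta>g k
      + ((1 / (\<gamma>g k + (norm (\<phi> k))\<^sup>2)) * (\<phi> k \<bullet> \<theta> + d k)) *\<^sub>R \<phi> k"
    and thetah_Suc: "\<And>k. \<theta>h (Suc k) = \<theta>h k +
      (det (mat 1 - \<Phi> k) / (\<gamma> + (det (mat 1 - \<Phi> k))\<^sup>2)) *\<^sub>R
        (adjugate (mat 1 - \<Phi> k) *v (\<theta>g k - \<Phi> k *v \<theta>g0) - det (mat 1 - \<Phi> k) *\<^sub>R \<theta>h k)"
begin

definition filtered_error :: "nat \<Rightarrow> real^'q" where
  "filtered_error k = \<theta>g k - \<Phi> k *v \<theta>g0 - \<theta> + \<Phi> k *v \<theta>"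

lemma filtered_error_0: "filtered_error 0 = 0"
  by (simp add: filtered_error_def thetag_0 Phi_0)

lemma filtered_error_Suc:
  "filtered_error (Suc k) = filtered_error k - (step_gain k * (\<phi> k \<bullet> filtered_error k)) *\<^sub>R \<phi> k
    + (step_gain k * d k) *\<^sub>R \<phi> k"
proof -
  have "\<theta>g (Suc k) = \<theta>g k - (step_gain k * (\<phi> k \<bullet> \<theta>g k)) *\<^sub>R \<phi> k
      + (step_gain k * (\<phi> k \<bullet> \<theta> + d k)) *\<^sub>R \<phi> k"
    by (simp add: thetag_Suc step_gain_def[symmetric] identity_minus_outer_mult_vector)
  then show ?thesis
    by (simp add: filtered_error_def Phi_Suc_mult_vector inner_diff_right inner_add_right algebra_simps)
qed

lemma filtered_error_bounded:
  obtains W where "\<And>k. norm (filtered_error k) \<le> W"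
proof -
  obtain C where "C > 0" and C: "\<And>k. norm (\<phi> k) \<le> C"
    using regressor_bounded by (auto simp: bounded_pos)
  obtain Md where "Md > 0" and Md: "\<And>k. \<bar>d k\<bar> \<le> Md"
    using disturbance_bounded by (auto simp: bounded_pos)
  have partial: "norm (filtered_error k) \<le> Md * C * (\<Sum>m<k. 1 / \<gamma>g m)" for k
  proof (induction k)
    case (Suc k)
    let ?w = "filtered_error k"
    have "(norm (?w - (step_gain k * (\<phi> k \<bullet> ?w)) *\<^sub>R \<phi> k))\<^sup>2 \<le> (norm ?w)\<^sup>2"
      using norm_rank_one_update_le[of "step_gain k" "\<phi> k" ?w] step_gain_pos[of k]
        step_gain_regressor_le_1[of k]
      by (smt (verit) mult_nonneg_nonneg zero_le_power2)
    then have "norm (?w - (step_gain k * (\<phi> k \<bullet> ?w)) *\<^sub>R \<phi> k) \<le> norm ?w"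
      by (simp add: power_mono_iff)
    moreover have "norm ((step_gain k * d k) *\<^sub>R \<phi> k) \<le> Md * C * (1 / \<gamma>g k)"
    proof -
      have "norm ((step_gain k * d k) *\<^sub>R \<phi> k) = step_gain k * (\<bar>d k\<bar> * norm (\<phi> k))"
        using step_gain_pos[of k] by (simp add: abs_mult)
      also have "\<dots> \<le> (1 / \<gamma>g k) * (Md * C)"
        using step_gain_le[of k] step_gain_pos[of k] Md[of k] C[of k] gain_pos[of k]
        by (intro mult_mono) (auto intro: mult_mono)
      finally show ?thesis by (simp add: mult.commute)
    qed
    ultimately have "norm (filtered_error (Suc k)) \<le> norm ?w + Md * C * (1 / \<gamma>g k)"
      unfolding filtered_error_Suc by (smt (verit) norm_triangle_ineq)
    with Suc.IH show ?case
      by (simp add: algebra_simps)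
  qed (simp add: filtered_error_0)
  have "(\<Sum>m<k. 1 / \<gamma>g m) \<le> (\<Sum>m. 1 / \<gamma>g m)" for k
    using gain_pos by (intro sum_le_suminf[OF inverse_gain_summable]) (auto intro: less_imp_le)
  then have "norm (filtered_error k) \<le> Md * C * (\<Sum>m. 1 / \<gamma>g m)" for k
    using partial[of k] \<open>C > 0\<close> \<open>Md > 0\<close> by (meson order_trans mult_left_mono mult_pos_pos less_imp_le)
  then show thesis ..
qed

lemma error_Suc:
  "\<theta>h (Suc k) - \<theta> = (\<gamma> / (\<gamma> + (det (mat 1 - \<Phi> k))\<^sup>2)) *\<^sub>R (\<theta>h k - \<theta>)
    + (det (mat 1 - \<Phi> k) / (\<gamma> + (det (mat 1 - \<Phi> k))\<^sup>2)) *\<^sub>R (adjugate (mat 1 - \<Phi> k) *v filtered_error k)"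
proof -
  let ?\<Delta> = "det (mat 1 - \<Phi> k)"
  let ?c = "?\<Delta> / (\<gamma> + ?\<Delta>\<^sup>2)"
  have "\<theta>h (Suc k) - \<theta> = (\<theta>h k - \<theta>) + ?c *\<^sub>R
      (adjugate (mat 1 - \<Phi> k) *v filtered_error k - ?\<Delta> *\<^sub>R (\<theta>h k - \<theta>))"
    by (simp add: thetah_Suc adjugate_estimator_identity[where \<theta> = \<theta>] filtered_error_def)
  also have "\<dots> = (1 - ?\<Delta> * ?c) *\<^sub>R (\<theta>h k - \<theta>) + ?c *\<^sub>R (adjugate (mat 1 - \<Phi> k) *v filtered_error k)"
    by (simp add: algebra_simps)
  also have "1 - ?\<Delta> * ?c = \<gamma> / (\<gamma> + ?\<Delta>\<^sup>2)"
  proof -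
    have "\<gamma> + ?\<Delta>\<^sup>2 > 0"
      using gamma_pos by (simp add: add_pos_nonneg)
    then show ?thesis
      by (simp add: field_simps power2_eq_square)
  qed
  finally show ?thesis .
qed

lemma filter_eventually_invertible:
  obtains \<delta> A T D where "\<delta> > 0" "A \<ge> 0"
    "\<And>k. T \<le> k \<Longrightarrow> \<delta> \<le> \<bar>det (mat 1 - \<Phi> k)\<bar> \<and> \<bar>det (mat 1 - \<Phi> k)\<bar> \<le> D \<and>
      (\<forall>x. norm (adjugate (mat 1 - \<Phi> k) *v x) \<le> A * norm x)"
proof -
  obtain P where lim: "\<Phi> \<longlonglongrightarrow> P"
    using Phi_convergent ..
  have "(\<lambda>k. mat 1 - \<Phi> k) \<longlonglongrightarrow> mat 1 - P"
    by (intro tendsto_intros lim)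
  moreover have "det (mat 1 - P) \<noteq> 0"
    using exciting det_limit_nonzero[OF lim] by blast
  ultimately obtain \<delta> D A where "\<delta> > 0" "A \<ge> 0" and "\<forall>\<^sub>F k in sequentially.
      \<delta> \<le> \<bar>det (mat 1 - \<Phi> k)\<bar> \<and> \<bar>det (mat 1 - \<Phi> k)\<bar> \<le> D \<and>
      (\<forall>x. norm (adjugate (mat 1 - \<Phi> k) *v x) \<le> A * norm x)"
    by (rule eventually_det_adjugate_bounds)
  with that show thesis
    unfolding eventually_sequentially by blast
qed

lemma error_bounded: "bounded (range (\<lambda>k. \<theta>h k - \<theta>))"
proof -
  define e where "e k = \<theta>h k - \<theta>" for k
  obtain \<delta> A T D where "\<delta> > 0" "A \<ge> 0" and T: "\<And>k. T \<le> k \<Longrightarrow>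
      \<delta> \<le> \<bar>det (mat 1 - \<Phi> k)\<bar> \<and> \<bar>det (mat 1 - \<Phi> k)\<bar> \<le> D \<and>
      (\<forall>x. norm (adjugate (mat 1 - \<Phi> k) *v x) \<le> A * norm x)"
    by (rule filter_eventually_invertible) (rule that)
  obtain W where W: "\<And>k. norm (filtered_error k) \<le> W"
    using filtered_error_bounded by blast
  define \<rho> where "\<rho> = \<gamma> / (\<gamma> + \<delta>\<^sup>2)"
  define B where "B = D / \<gamma> * (A * W)"
  have "0 \<le> \<rho>"
    using gamma_pos by (simp add: \<rho>_def)
  have "\<rho> < 1"
    using gamma_pos \<open>\<delta> > 0\<close> by (simp add: \<rho>_def divide_less_eq_1 add_pos_pos)
  have step: "norm (e (Suc k)) \<le> \<rho> * norm (e k) + B" if "T \<le> k" for k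
  proof -
    let ?\<Delta> = "det (mat 1 - \<Phi> k)" and ?Aw = "adjugate (mat 1 - \<Phi> k) *v filtered_error k"
    have pos: "\<gamma> + ?\<Delta>\<^sup>2 > 0"
      using gamma_pos by (simp add: add_pos_nonneg)
    have "\<delta>\<^sup>2 \<le> ?\<Delta>\<^sup>2"
      using T[OF that] \<open>\<delta> > 0\<close> by (simp add: abs_le_square_iff[symmetric])
    then have contraction: "\<gamma> / (\<gamma> + ?\<Delta>\<^sup>2) \<le> \<rho>"
      unfolding \<rho>_def using gamma_pos pos \<open>\<delta> > 0\<close>
      by (intro divide_left_mono) (auto intro!: mult_pos_pos add_pos_pos)
    have "\<bar>?\<Delta>\<bar> / (\<gamma> + ?\<Delta>\<^sup>2) \<le> D / \<gamma>"
      using T[OF that] gamma_pos pos by (intro frac_le) auto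
    moreover have "norm ?Aw \<le> A * W"
      using T[OF that] mult_left_mono[OF W \<open>A \<ge> 0\<close>] by (meson order_trans)
    ultimately have input: "\<bar>?\<Delta>\<bar> / (\<gamma> + ?\<Delta>\<^sup>2) * norm ?Aw \<le> B"
      unfolding B_def using pos T[OF that] gamma_pos by (intro mult_mono) auto
    have "norm (e (Suc k)) \<le> norm ((\<gamma> / (\<gamma> + ?\<Delta>\<^sup>2)) *\<^sub>R e k) + norm ((?\<Delta> / (\<gamma> + ?\<Delta>\<^sup>2)) *\<^sub>R ?Aw)"
      unfolding e_def error_Suc by (rule norm_triangle_ineq)
    also have "\<dots> = \<gamma> / (\<gamma> + ?\<Delta>\<^sup>2) * norm (e k) + \<bar>?\<Delta>\<bar> / (\<gamma> + ?\<Delta>\<^sup>2) * norm ?Aw"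
      using gamma_pos pos by simp
    also have "\<dots> \<le> \<rho> * norm (e k) + B"
      using contraction input by (intro add_mono mult_right_mono) auto
    finally show ?thesis .
  qed
  have "norm (e k) \<le> max (norm (e T)) (B / (1 - \<rho>))" if "T \<le> k" for k
    using le_max_if_affine_contraction[of T "\<lambda>k. norm (e k)", OF step] \<open>0 \<le> \<rho>\<close> \<open>\<rho> < 1\<close> that
    by blast
  then have "bounded (range e)"
    by (rule bounded_range_if_eventually_bounded)
  then show ?thesis
    by (simp add: e_def[abs_def])
qed

end

theorem proposition4:
  fixes \<theta> :: "real^'q"
  shows
  "(\<forall>(\<phi>::real \<Rightarrow> real^'q) (d::real \<Rightarrow> real) (\<gamma>g::real \<Rightarrow> real) (\<gamma>::real)
      (\<theta>g0::real^'q) (\<theta>g::real \<Rightarrow> real^'q) (\<Phi>::real \<Rightarrow> real^'q^'q) (\<theta>h::real \<Rightarrow> real^'q).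
      continuous_on {0..} \<phi> \<and> bounded (\<phi> ` {0..}) \<and> bounded (d ` {0..}) \<and>
      (\<exists>\<tau>::'q \<Rightarrow> real. (\<forall>i. \<tau> i > 0) \<and> rank (\<chi> i j. \<phi> (\<tau> j) $ i) = CARD('q)) \<and>
      continuous_on {0..} \<gamma>g \<and> (\<forall>t\<ge>0. \<gamma>g t > 0) \<and> \<gamma>g integrable_on {0..} \<and>
      \<gamma> > 0 \<and>
      \<theta>g 0 = \<theta>g0 \<and> \<Phi> 0 = mat 1 \<and>
      (\<forall>t\<ge>0. (\<theta>g has_vector_derivative
          (- (\<gamma>g t *\<^sub>R (outer (\<phi> t) *v \<theta>g t)) + (\<gamma>g t * (\<phi> t \<bullet> \<theta> + d t)) *\<^sub>R \<phi> t))
          (at t within {0..})) \<and>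
      (\<forall>t\<ge>0. (\<Phi> has_vector_derivative (- (\<gamma>g t *\<^sub>R (outer (\<phi> t) ** \<Phi> t))))
          (at t within {0..})) \<and>
      (\<forall>t\<ge>0. (\<theta>h has_vector_derivative
          (\<gamma> * det (mat 1 - \<Phi> t)) *\<^sub>R
            (adjugate (mat 1 - \<Phi> t) *v (\<theta>g t - \<Phi> t *v \<theta>g0) - det (mat 1 - \<Phi> t) *\<^sub>R \<theta>h t))
          (at t within {0..}))
      \<longrightarrow> bounded ((\<lambda>t. \<theta>h t - \<theta>) ` {0..}))
   \<and>
   (\<forall>(\<phi>::nat \<Rightarrow> real^'q) (d::nat \<Rightarrow> real) (\<gamma>g::nat \<Rightarrow> real) (\<gamma>::real)
      (\<theta>g0::real^'q) (\<theta>g::nat \<Rightarrow> real^'q) (\<Phi>::nat \<Rightarrow> real^'q^'q) (\<theta>h::nat \<Rightarrow> real^'q).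
      bounded (range \<phi>) \<and> bounded (range d) \<and>
      (\<exists>\<tau>::'q \<Rightarrow> nat. rank (\<chi> i j. \<phi> (\<tau> j) $ i) = CARD('q)) \<and>
      (\<forall>k. \<gamma>g k > 0) \<and> summable (\<lambda>k. 1 / \<gamma>g k) \<and>
      \<gamma> > 0 \<and>
      \<theta>g 0 = \<theta>g0 \<and> \<Phi> 0 = mat 1 \<and>
      (\<forall>k. \<theta>g (Suc k) =
          (mat 1 - (1 / (\<gamma>g k + (norm (\<phi> k))\<^sup>2)) *\<^sub>R outer (\<phi> k)) *v \<theta>g k
          + ((1 / (\<gamma>g k + (norm (\<phi> k))\<^sup>2)) * (\<phi> k \<bullet> \<theta> + d k)) *\<^sub>R \<phi> k) \<and>
      (\<forall>k. \<Phi> (Suc k) =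
          (mat 1 - (1 / (\<gamma>g k + (norm (\<phi> k))\<^sup>2)) *\<^sub>R outer (\<phi> k)) ** \<Phi> k) \<and>
      (\<forall>k. \<theta>h (Suc k) = \<theta>h k +
          (det (mat 1 - \<Phi> k) / (\<gamma> + (det (mat 1 - \<Phi> k))\<^sup>2)) *\<^sub>R
            (adjugate (mat 1 - \<Phi> k) *v (\<theta>g k - \<Phi> k *v \<theta>g0) - det (mat 1 - \<Phi> k) *\<^sub>R \<theta>h k))
      \<longrightarrow> bounded (range (\<lambda>k. \<theta>h k - \<theta>)))"
proof (intro conjI allI impI, goal_cases)
  case (1 \<phi> d \<gamma>g \<gamma> \<theta>g0 \<theta>g \<Phi> \<theta>h)
  \<comment> \<open>continuity of \<open>\<phi>\<close> only serves the existence of solutions, which are given here\<close>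
  then have "ct_estimator \<phi> \<gamma>g \<Phi> \<theta> d \<gamma> \<theta>g0 \<theta>g \<theta>h"
    unfolding ct_estimator_def ct_regressor_filter_def ct_estimator_axioms_def
    by (auto intro: less_imp_le)
  then show ?case
    by (rule ct_estimator.error_bounded)
next
  case (2 \<phi> d \<gamma>g \<gamma> \<theta>g0 \<theta>g \<Phi> \<theta>h)
  then have "dt_estimator \<phi> \<gamma>g \<Phi> \<theta> d \<gamma> \<theta>g0 \<theta>g \<theta>h"
    unfolding dt_estimator_def dt_regressor_filter_def dt_estimator_axioms_def
    by auto
  then show ?case
    by (rule dt_estimator.error_bounded)
qed

end
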